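(* In the linear setting of the context, for all $\lambda>0$, $\sigma\in(0,1)$ and $\theta\ge0$, there exists $\tau>0$ such that for all initial conditions $x(0)\in\mathbb{R}^n$ the execution times generated by the dynamic event generator satisfy $t_{i+1}-t_i\ge\tau$ for all $i\in\mathbb I$. Moreover $x(t)\to0$ and $\eta(t)\to0$ as $t\to\infty$. If in addition $\lambda=(1-\sigma)\kappa$, then for all $t\ge0$, $V(x(t))\le V(x(0))e^{(\sigma-1)\kappa t}$.
   Context: Consider $\dot x=Ax+Bu$, $x\in\mathbb{R}^n$, $u\in\mathbb{R}^m$, and a gain $K$ such that $A+BK$ is Hurwitz; let $P,Q$ be symmetric positive definite with $(A+BK)^\top P+P(A+BK)=-Q$, $V(x)=x^\top Px$, and let $\kappa>0$ be such that $Q\ge\kappa P$. The input is $u(t)=Kx(t_i)$ for $t\in[t_i,t_{i+1})$, with $e(t)=x(t_i)-x(t)$, so $\dot x=Ax+BK(x+e)$. If infinitely many executions, $\mathbb I=\mathbb N$; otherwise $\mathbb I=\{0,\dots,I\}$. $g(t^-)$ is the left limit. Dynamic event generator with parameters $\sigma\in(0,1)$, $\lambda>0$, $\theta\ge0$: $\dot\eta=-\lambda\eta+\sigma x^\top Qx-2x^\top PBKe$, $\eta(0)=0$; $t_0=0$, $t_{i+1}=\inf\{t>t_i:\ \eta(t)+\theta(\sigma x(t)^\top Qx(t)-2x(t)^\top PBKe(t^-))\le0\}$. Assume $x(t_i)\ne0$ for all $i$. *)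

theory Defs
  imports "HOL-Analysis.Analysis"
begin

definition quad :: "real^'n^'n \<Rightarrow> real^'n \<Rightarrow> real" where
  "quad M v = v \<bullet> (M *v v)"

definition sym_pos_def :: "real^'n^'n \<Rightarrow> bool" where
  "sym_pos_def M \<longleftrightarrow> transpose M = M \<and> (\<forall>v. v \<noteq> 0 \<longrightarrow> quad M v > 0)"

definition hurwitz :: "real^'n^'n \<Rightarrow> bool" where
  "hurwitz M \<longleftrightarrow>
     (\<forall>(l::complex) (v::complex^'n). v \<noteq> 0 \<and>
        (\<chi> i j. complex_of_real (M $ i $ j)) *v v = l *s v \<longrightarrow> Re l < 0)"

definition seg :: "nat set \<Rightarrow> (nat \<Rightarrow> real) \<Rightarrow> nat \<Rightarrow> real set" where
  "seg I t i = (if Suc i \<in> I then {t i..<t (Suc i)} else {t i..})"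

definition sample_idx :: "nat set \<Rightarrow> (nat \<Rightarrow> real) \<Rightarrow> real \<Rightarrow> nat" where
  "sample_idx I t s = (THE i. i \<in> I \<and> s \<in> seg I t i)"

definition err :: "nat set \<Rightarrow> (nat \<Rightarrow> real) \<Rightarrow> (real \<Rightarrow> real^'n) \<Rightarrow> real \<Rightarrow> real^'n" where
  "err I t x s = x (t (sample_idx I t s)) - x s"

definition trig_set ::
  "real^'m^'n \<Rightarrow> real^'n^'m \<Rightarrow> real^'n^'n \<Rightarrow> real^'n^'n \<Rightarrow> real \<Rightarrow> real \<Rightarrow>
   (real \<Rightarrow> real^'n) \<Rightarrow> (real \<Rightarrow> real) \<Rightarrow> (nat \<Rightarrow> real) \<Rightarrow> nat set \<Rightarrow> nat \<Rightarrow> real set" where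
  "trig_set B K P Q sig th x eta t I i =
     {s. s > t i \<and>
         eta s + th * (sig * quad Q (x s)
            - 2 * (x s \<bullet> (P *v (B *v (K *v (Lim (at_left s) (err I t x))))))) \<le> 0}"

definition event_solution ::
  "real^'n^'n \<Rightarrow> real^'m^'n \<Rightarrow> real^'n^'m \<Rightarrow> real^'n^'n \<Rightarrow> real^'n^'n \<Rightarrow>
   real \<Rightarrow> real \<Rightarrow> real \<Rightarrow>
   (real \<Rightarrow> real^'n) \<Rightarrow> (real \<Rightarrow> real) \<Rightarrow> (nat \<Rightarrow> real) \<Rightarrow> nat set \<Rightarrow> bool" where
  "event_solution A B K P Q lam sig th x eta t I \<longleftrightarrow>
     (I = UNIV \<or> (\<exists>N. I = {0..N})) \<and>
     t 0 = 0 \<and> (\<forall>i. Suc i \<in> I \<longrightarrow> t i < t (Suc i)) \<and>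
     continuous_on {0..} x \<and> continuous_on {0..} eta \<and> eta 0 = 0 \<and>
     (\<forall>i\<in>I. \<forall>s\<in>seg I t i.
        (x has_vector_derivative (A *v x s + B *v (K *v x (t i)))) (at s within seg I t i) \<and>
        (eta has_real_derivative
           (- lam * eta s + sig * quad Q (x s)
            - 2 * (x s \<bullet> (P *v (B *v (K *v (x (t i) - x s)))))))
           (at s within seg I t i)) \<and>
     (\<forall>i\<in>I. Suc i \<in> I \<longrightarrow>
        trig_set B K P Q sig th x eta t I i \<noteq> {} \<and>
        t (Suc i) = Inf (trig_set B K P Q sig th x eta t I i)) \<and>
     (\<forall>i\<in>I. Suc i \<notin> I \<longrightarrow> trig_set B K P Q sig th x eta t I i = {}) \<and>
     (\<forall>i\<in>I. x (t i) \<noteq> 0)"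

end

theory Submission
  imports Defs "HOL-Real_Asymp.Real_Asymp"
begin

text \<open>Between executions the storage function \<open>W = x\<^sup>T P x + eta\<close> satisfies
  \<open>W' = -(1 - sig) x\<^sup>T Q x - lam * eta\<close>: the cross term \<open>2 x\<^sup>T P B K e\<close> of \<open>V'\<close> is exactly the
  negative of the one in the input of \<open>eta\<close>. As \<open>eta\<close> cannot become negative without the triggering
  condition firing first, \<open>W\<close> decays like \<open>exp (- mu * t)\<close> for \<open>mu = min lam ((1 - sig) * kappa)\<close>,
  which gives convergence and, for \<open>lam = (1 - sig) * kappa\<close>, the decay rate of \<open>V\<close>.

  For the dwell time, \<open>|e|\<^sup>2 + |x(t\<^sub>i)|\<^sup>2\<close> grows at most exponentially after a sample, so for a
  uniform time \<open>tau\<close> the error stays a small fraction of \<open>|x(t\<^sub>i)|\<close>. Then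
  \<open>sig x\<^sup>T Q x - 2 x\<^sup>T P B K e > 0\<close>, \<open>eta\<close> increases strictly, and an execution before \<open>t\<^sub>i + tau\<close>
  is impossible: the triggering condition would fail on \<open>(t\<^sub>i, t\<^sub>i\<^sub>+\<^sub>1]\<close> and, as \<open>eta(t\<^sub>i\<^sub>+\<^sub>1) > 0\<close>,
  also just after \<open>t\<^sub>i\<^sub>+\<^sub>1\<close>, contradicting that \<open>t\<^sub>i\<^sub>+\<^sub>1\<close> is the infimum of the triggering times.
  Summing the dwell times also shows that the execution intervals cover \<open>[0, \<infinity>)\<close>.\<close>

section \<open>Quadratic forms\<close>

lemma inner_matrix_vector_symmetric:
  fixes P :: "real^'n^'n"
  assumes "transpose P = P"
  shows "u \<bullet> (P *v v) = v \<bullet> (P *v u)"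
proof -
  have "u \<bullet> (P *v v) = (u v* P) \<bullet> v" by (simp add: dot_lmul_matrix)
  also have "u v* P = P *v u" using vector_transpose_matrix[of u P] assms by simp
  finally show ?thesis by (simp add: inner_commute)
qed

lemma quad_uminus: "quad (- M) v = - quad M v"
proof -
  have "(- M) *v v = - (M *v v)"
    by (simp add: matrix_vector_mult_def vec_eq_iff sum_negf)
  then show ?thesis unfolding quad_def by simp
qed

lemma quad_lyapunov_sum:
  fixes F P :: "real^'n^'n"
  assumes "transpose P = P"
  shows "quad (transpose F ** P + P ** F) v = 2 * (v \<bullet> (P *v (F *v v)))"
proof -
  have "v \<bullet> (transpose F *v (P *v v)) = (F *v v) \<bullet> (P *v v)"
    using dot_lmul_matrix[of "P *v v" F] by (simp add: inner_commute)
  also have "\<dots> = v \<bullet> (P *v (F *v v))"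
    using inner_matrix_vector_symmetric[OF assms] by simp
  finally show ?thesis
    unfolding quad_def
    by (simp add: matrix_vector_mult_add_rdistrib matrix_vector_mul_assoc[symmetric] inner_add_right)
qed

lemma quad_scaleR: "quad M (c *\<^sub>R v) = c\<^sup>2 * quad M v"
  unfolding quad_def by (simp add: matrix_vector_mult_scaleR power2_eq_square)

definition quad_min :: "real^'n^'n \<Rightarrow> real" where
  "quad_min M = (INF v\<in>sphere 0 1. quad M v)"

lemma
  assumes "sym_pos_def M"
  shows quad_min_pos: "quad_min M > 0"
    and quad_min_le: "quad_min M * (norm v)\<^sup>2 \<le> quad M v"
proof -
  have "sphere (0::real^'n) 1 \<noteq> {}"
    by (simp add: sphere_eq_empty)
  moreover have "continuous_on (sphere 0 1) (quad M)"
    unfolding quad_def by (intro continuous_intros)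
  ultimately obtain u where u: "u \<in> sphere 0 1" and u_min: "\<And>w. w \<in> sphere 0 1 \<Longrightarrow> quad M u \<le> quad M w"
    using continuous_attains_inf[OF compact_sphere] by blast
  have min_eq: "quad_min M = quad M u"
    unfolding quad_min_def using u u_min by (intro cInf_eq_minimum) auto
  have "u \<noteq> 0"
    using u by auto
  then show "quad_min M > 0"
    using assms unfolding min_eq sym_pos_def_def by auto
  show "quad_min M * (norm v)\<^sup>2 \<le> quad M v"
  proof (cases "v = 0")
    case True
    then show ?thesis by (simp add: quad_def)
  next
    case False
    have "quad M u \<le> quad M ((1 / norm v) *\<^sub>R v)"
      using False by (intro u_min) simp
    then show ?thesis
      using False by (simp add: min_eq quad_scaleR field_simps)
  qed
qed

lemma quad_nonneg: "sym_pos_def M \<Longrightarrow> quad M v \<ge> 0"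
  using quad_min_le[of M v] quad_min_pos[of M] by (smt (verit) zero_le_mult_iff zero_le_power2)

lemma norm_matrix_vector_le:
  fixes M :: "real^'n^'m"
  shows "norm (M *v v) \<le> onorm ((*v) M) * norm v"
  by (rule onorm) simp

lemma onorm_matrix_nonneg:
  fixes M :: "real^'n^'m"
  shows "onorm ((*v) M) \<ge> 0"
  by (rule onorm_pos_le) simp

lemma continuous_matrix_vector_mult [continuous_intros]:
  fixes M :: "real^'n^'m"
  shows "continuous F g \<Longrightarrow> continuous F (\<lambda>r. M *v g r)"
  by (rule bounded_linear.continuous[OF matrix_vector_mul_bounded_linear])

lemma continuous_on_matrix_vector_mult [continuous_intros]:
  fixes M :: "real^'n^'m"
  shows "continuous_on S g \<Longrightarrow> continuous_on S (\<lambda>r. M *v g r)"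
  by (rule bounded_linear.continuous_on[OF matrix_vector_mul_bounded_linear])

lemma has_real_derivative_quad:
  fixes M :: "real^'n^'n"
  assumes "transpose M = M" and "(f has_vector_derivative f') (at r)"
  shows "((\<lambda>r. quad M (f r)) has_real_derivative 2 * (f r \<bullet> (M *v f'))) (at r)"
proof -
  have "((\<lambda>r. M *v f r) has_vector_derivative M *v f') (at r)"
    by (rule bounded_linear.has_vector_derivative[OF _ assms(2)]) simp
  then have "((\<lambda>r. f r \<bullet> (M *v f r)) has_derivative
        (\<lambda>h. f r \<bullet> (h *\<^sub>R (M *v f')) + (h *\<^sub>R f') \<bullet> (M *v f r))) (at r)"
    using has_derivative_inner assms(2) unfolding has_vector_derivative_def by blast
  moreover have "f' \<bullet> (M *v f r) = f r \<bullet> (M *v f')"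
    by (rule inner_matrix_vector_symmetric[OF assms(1)])
  ultimately show ?thesis
    unfolding quad_def has_real_derivative_iff_has_vector_derivative has_vector_derivative_def
    by (simp add: algebra_simps)
qed

section \<open>Exponentially weighted monotonicity\<close>

lemma exp_scaled_mono:
  fixes f f' :: "real \<Rightarrow> real"
  assumes "a \<le> b" and "continuous_on {a..b} f"
    and "\<And>r. a < r \<Longrightarrow> r < b \<Longrightarrow> (f has_real_derivative f' r) (at r)"
    and "\<And>r. a < r \<Longrightarrow> r < b \<Longrightarrow> 0 \<le> k * f r + f' r"
  shows "exp (k * a) * f a \<le> exp (k * b) * f b"
proof (rule DERIV_nonneg_imp_increasing_open[OF assms(1)])
  fix r assume r: "a < r" "r < b"
  have "((\<lambda>r. exp (k * r) * f r) has_real_derivative exp (k * r) * (k * f r + f' r)) (at r)"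
    by (rule derivative_eq_intros refl assms(3)[OF r] | simp add: algebra_simps)+
  moreover have "0 \<le> exp (k * r) * (k * f r + f' r)"
    using assms(4)[OF r] by simp
  ultimately show "\<exists>y. ((\<lambda>r. exp (k * r) * f r) has_real_derivative y) (at r) \<and> 0 \<le> y"
    by blast
qed (intro continuous_intros assms(2))

lemma exp_scaled_strict_mono:
  fixes f f' :: "real \<Rightarrow> real"
  assumes "a < b" and "continuous_on {a..b} f"
    and "\<And>r. a < r \<Longrightarrow> r < b \<Longrightarrow> (f has_real_derivative f' r) (at r)"
    and "\<And>r. a < r \<Longrightarrow> r < b \<Longrightarrow> 0 < k * f r + f' r"
  shows "exp (k * a) * f a < exp (k * b) * f b"
proof (rule DERIV_pos_imp_increasing_open[OF assms(1)])
  fix r assume r: "a < r" "r < b"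
  have "((\<lambda>r. exp (k * r) * f r) has_real_derivative exp (k * r) * (k * f r + f' r)) (at r)"
    by (rule derivative_eq_intros refl assms(3)[OF r] | simp add: algebra_simps)+
  moreover have "0 < exp (k * r) * (k * f r + f' r)"
    using assms(4)[OF r] by simp
  ultimately show "\<exists>y. ((\<lambda>r. exp (k * r) * f r) has_real_derivative y) (at r) \<and> 0 < y"
    by blast
qed (intro continuous_intros assms(2))

lemma exp_scaled_antimono:
  fixes f f' :: "real \<Rightarrow> real"
  assumes "a \<le> b" and "continuous_on {a..b} f"
    and "\<And>r. a < r \<Longrightarrow> r < b \<Longrightarrow> (f has_real_derivative f' r) (at r)"
    and "\<And>r. a < r \<Longrightarrow> r < b \<Longrightarrow> k * f r + f' r \<le> 0"
  shows "exp (k * b) * f b \<le> exp (k * a) * f a"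
proof -
  have "exp (k * a) * - f a \<le> exp (k * b) * - f b"
  proof (rule exp_scaled_mono[where f' = "\<lambda>r. - f' r"])
    show "continuous_on {a..b} (\<lambda>r. - f r)"
      using assms(2) by (intro continuous_intros)
    fix r assume r: "a < r" "r < b"
    show "((\<lambda>r. - f r) has_real_derivative - f' r) (at r)"
      using assms(3)[OF r] by (rule derivative_intros)
    show "0 \<le> k * - f r + - f' r"
      using assms(4)[OF r] by simp
  qed (rule assms(1))
  then show ?thesis by simp
qed

lemma nonneg_at_left_endpoint:
  fixes f :: "real \<Rightarrow> real"
  assumes "a < b" and "isCont f b" and "\<And>s. a < s \<Longrightarrow> s < b \<Longrightarrow> f s \<ge> 0"
  shows "f b \<ge> 0"
proof (rule tendsto_lowerbound)
  show "(f \<longlongrightarrow> f b) (at_left b)"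
    using assms(2) by (simp add: isCont_def filterlim_at_split)
  show "eventually (\<lambda>s. 0 \<le> f s) (at_left b)"
    using eventually_at_left_real[OF assms(1)] by eventually_elim (use assms(3) in auto)
qed simp

locale event_triggered_loop =
  fixes A :: "real^'n^'n" and B :: "real^'m^'n" and K :: "real^'n^'m"
    and P Q :: "real^'n^'n" and kappa lam sig th :: real
  assumes pos_P: "sym_pos_def P" and pos_Q: "sym_pos_def Q"
    and lyapunov: "transpose (A + B ** K) ** P + P ** (A + B ** K) = - Q"
    and Q_ge_P: "\<forall>v. quad Q v \<ge> kappa * quad P v"
    and kappa_pos: "kappa > 0" and lam_pos: "lam > 0"
    and sig_pos: "0 < sig" and sig_less_1: "sig < 1" and th_nonneg: "th \<ge> 0"
begin

lemma sym_P: "transpose P = P"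
  using pos_P unfolding sym_pos_def_def by simp

lemma quad_P_nonneg: "quad P v \<ge> 0"
  using quad_nonneg[OF pos_P] .

lemma lyapunov_derivative: "2 * (v \<bullet> (P *v ((A + B ** K) *v v))) = - quad Q v"
  using quad_lyapunov_sum[OF sym_P, of "A + B ** K" v] quad_uminus[of Q v] lyapunov by simp

text \<open>On an inter-execution interval the sampling error \<open>e\<close> obeys \<open>e' = A e - (A + B K) x(t\<^sub>i)\<close>;
  \<open>error_growth_rate\<close> bounds the growth of \<open>|e|\<^sup>2 + |x(t\<^sub>i)|\<^sup>2\<close>, and as long as
  \<open>|e| \<le> error_ratio * |x(t\<^sub>i)|\<close> the triggering quantity stays positive.\<close>

definition error_growth_rate :: real where
  "error_growth_rate = 2 * onorm ((*v) A) + onorm ((*v) (A + B ** K)) + 1"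

definition error_ratio :: real where
  "error_ratio = min (1 / 2) (sig * quad_min Q / (8 * (onorm ((*v) (P ** (B ** K))) + 1)))"

definition dwell_time :: real where
  "dwell_time = ln (1 + error_ratio\<^sup>2) / error_growth_rate"

lemma error_growth_rate_pos: "error_growth_rate > 0"
  unfolding error_growth_rate_def using onorm_matrix_nonneg[of A] onorm_matrix_nonneg[of "A + B ** K"]
  by linarith

lemma error_ratio_pos: "error_ratio > 0"
  unfolding error_ratio_def using sig_pos quad_min_pos[OF pos_Q] onorm_matrix_nonneg[of "P ** (B ** K)"]
  by simp

lemma dwell_time_pos: "dwell_time > 0"
  unfolding dwell_time_def using error_ratio_pos error_growth_rate_pos
  by (intro divide_pos_pos ln_gt_zero) auto

lemma exp_dwell_time: "exp (error_growth_rate * dwell_time) = 1 + error_ratio\<^sup>2"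
  unfolding dwell_time_def using error_growth_rate_pos by (simp add: add_pos_nonneg)

lemma sampling_error_derivative_bound:
  "2 * (e \<bullet> (A *v e - (A + B ** K) *v xi)) \<le> error_growth_rate * ((norm e)\<^sup>2 + (norm xi)\<^sup>2)"
proof -
  define a where "a = onorm ((*v) A)"
  define f where "f = onorm ((*v) (A + B ** K))"
  define w where "w = (A + B ** K) *v xi"
  have a: "0 \<le> a" and f: "0 \<le> f"
    unfolding a_def f_def by (rule onorm_matrix_nonneg)+
  have "e \<bullet> (A *v e) \<le> norm e * (a * norm e)"
    using norm_cauchy_schwarz[of e "A *v e"] norm_matrix_vector_le[of A e]
    unfolding a_def by (meson mult_left_mono norm_ge_zero order_trans)
  then have Ae: "e \<bullet> (A *v e) \<le> a * (norm e)\<^sup>2"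
    by (simp add: power2_eq_square algebra_simps)
  have "- (e \<bullet> w) \<le> norm e * (f * norm xi)"
    using norm_cauchy_schwarz[of "- e" w] norm_matrix_vector_le[of "A + B ** K" xi]
    unfolding f_def w_def by (simp add: mult_left_mono order_trans)
  moreover have "f * (2 * (norm e * norm xi)) \<le> f * ((norm e)\<^sup>2 + (norm xi)\<^sup>2)"
    using sum_squares_bound[of "norm e" "norm xi"] f by (intro mult_left_mono) (auto simp: power2_eq_square)
  ultimately have ew: "- 2 * (e \<bullet> w) \<le> f * ((norm e)\<^sup>2 + (norm xi)\<^sup>2)"
    by (simp add: algebra_simps)
  have "error_growth_rate * ((norm e)\<^sup>2 + (norm xi)\<^sup>2)
      = 2 * (a * (norm e)\<^sup>2) + 2 * (a * (norm xi)\<^sup>2) + f * ((norm e)\<^sup>2 + (norm xi)\<^sup>2)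
        + ((norm e)\<^sup>2 + (norm xi)\<^sup>2)"
    unfolding error_growth_rate_def a_def f_def by (simp add: algebra_simps)
  moreover have "0 \<le> a * (norm xi)\<^sup>2"
    using a by simp
  ultimately show ?thesis
    using Ae ew zero_le_power2[of "norm e"] zero_le_power2[of "norm xi"]
    unfolding w_def[symmetric] inner_diff_right by (smt (verit))
qed

end

locale event_triggered_execution = event_triggered_loop +
  fixes x and eta :: "real \<Rightarrow> real" and t :: "nat \<Rightarrow> real" and I :: "nat set"
  assumes solution: "event_solution A B K P Q lam sig th x eta t I"
begin

lemma index_set_cases: "I = UNIV \<or> (\<exists>N. I = {0..N})"
  and t_0: "t 0 = 0"
  and t_less_Suc: "Suc i \<in> I \<Longrightarrow> t i < t (Suc i)"
  and x_continuous: "continuous_on {0..} x"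
  and eta_continuous: "continuous_on {0..} eta"
  and eta_0: "eta 0 = 0"
  and trigger_set_next: "i \<in> I \<Longrightarrow> Suc i \<in> I \<Longrightarrow>
     trig_set B K P Q sig th x eta t I i \<noteq> {} \<and> t (Suc i) = Inf (trig_set B K P Q sig th x eta t I i)"
  and trigger_set_last: "i \<in> I \<Longrightarrow> Suc i \<notin> I \<Longrightarrow> trig_set B K P Q sig th x eta t I i = {}"
  and x_sample_nonzero: "i \<in> I \<Longrightarrow> x (t i) \<noteq> 0"
  using solution unfolding event_solution_def by blast+

lemma derivatives_within_seg:
  assumes "i \<in> I" "s \<in> seg I t i"
  shows "(x has_vector_derivative (A *v x s + B *v (K *v x (t i)))) (at s within seg I t i)"
    and "(eta has_real_derivative
           (- lam * eta s + sig * quad Q (x s) - 2 * (x s \<bullet> (P *v (B *v (K *v (x (t i) - x s)))))))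
           (at s within seg I t i)"
  using solution assms unfolding event_solution_def by blast+

lemma index_set_downward_closed: "j \<in> I \<Longrightarrow> i \<le> j \<Longrightarrow> i \<in> I"
  using index_set_cases by auto

lemma t_Suc_le: "j \<in> I \<Longrightarrow> i < j \<Longrightarrow> t (Suc i) \<le> t j"
proof (induction j)
  case (Suc j)
  then show ?case
    using t_less_Suc[of j] Suc.IH index_set_downward_closed[of "Suc j" j]
    by (cases "i = j") (auto simp: less_Suc_eq)
qed simp

lemma t_less: "j \<in> I \<Longrightarrow> i < j \<Longrightarrow> t i < t j"
  using t_less_Suc[of i] index_set_downward_closed[of j "Suc i"] t_Suc_le[of j i] by fastforce

lemma t_nonneg: "i \<in> I \<Longrightarrow> t i \<ge> 0"
  using t_less[of i 0] t_0 by (cases "i = 0") auto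

lemma seg_unique: "i \<in> I \<Longrightarrow> j \<in> I \<Longrightarrow> s \<in> seg I t i \<Longrightarrow> s \<in> seg I t j \<Longrightarrow> i = j"
proof -
  have False if "j \<in> I" "s \<in> seg I t i" "s \<in> seg I t j" "i < j" for i j
  proof -
    have "Suc i \<in> I" using index_set_downward_closed that by simp
    then have "s < t (Suc i)" using that unfolding seg_def by auto
    also have "\<dots> \<le> t j" using t_Suc_le that by blast
    also have "\<dots> \<le> s" using that unfolding seg_def by (auto split: if_splits)
    finally show False by simp
  qed
  then show "i \<in> I \<Longrightarrow> j \<in> I \<Longrightarrow> s \<in> seg I t i \<Longrightarrow> s \<in> seg I t j \<Longrightarrow> i = j"
    by (metis linorder_neqE_nat)
qed

lemma err_eq: "i \<in> I \<Longrightarrow> s \<in> seg I t i \<Longrightarrow> err I t x s = x (t i) - x s"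
  unfolding err_def sample_idx_def by (subst the_equality) (use seg_unique in auto)

lemma mem_interior_seg: "r \<in> interior (seg I t i) \<longleftrightarrow> t i < r \<and> (Suc i \<in> I \<longrightarrow> r < t (Suc i))"
  by (simp add: seg_def)

lemma has_vector_derivative_x:
  assumes "i \<in> I" "r \<in> interior (seg I t i)"
  shows "(x has_vector_derivative (A *v x r + B *v (K *v x (t i)))) (at r)"
  using derivatives_within_seg(1)[OF assms(1) interior_subset[THEN subsetD, OF assms(2)]]
    at_within_interior[OF assms(2)] by simp

lemma x_continuous_on: "0 \<le> a \<Longrightarrow> continuous_on {a..b} x"
  by (rule continuous_on_subset[OF x_continuous]) auto

lemma eta_continuous_on: "0 \<le> a \<Longrightarrow> continuous_on {a..b} eta"
  by (rule continuous_on_subset[OF eta_continuous]) auto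

lemma isCont_x: "s > 0 \<Longrightarrow> isCont x s"
  using continuous_on_interior[OF x_continuous] by simp

lemma isCont_eta: "s > 0 \<Longrightarrow> isCont eta s"
  using continuous_on_interior[OF eta_continuous] by simp

definition trigger_term :: "nat \<Rightarrow> real \<Rightarrow> real" where
  "trigger_term i s = sig * quad Q (x s) - 2 * (x s \<bullet> (P *v (B *v (K *v (x (t i) - x s)))))"

lemma has_real_derivative_eta:
  assumes "i \<in> I" "r \<in> interior (seg I t i)"
  shows "(eta has_real_derivative (- lam * eta r + trigger_term i r)) (at r)"
  using derivatives_within_seg(2)[OF assms(1) interior_subset[THEN subsetD, OF assms(2)]]
    at_within_interior[OF assms(2)] unfolding trigger_term_def by (simp add: algebra_simps)

lemma Lim_at_left_err:
  assumes "i \<in> I" "t i < s" "Suc i \<in> I \<longrightarrow> s \<le> t (Suc i)"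
  shows "Lim (at_left s) (err I t x) = x (t i) - x s"
proof (rule tendsto_Lim)
  have "eventually (\<lambda>r. x (t i) - x r = err I t x r) (at_left s)"
    using eventually_at_left_real[OF assms(2)]
    by eventually_elim (use assms in \<open>auto simp: seg_def intro!: err_eq[symmetric]\<close>)
  moreover have "((\<lambda>r. x (t i) - x r) \<longlongrightarrow> x (t i) - x s) (at_left s)"
    using isCont_x[of s] t_nonneg[OF assms(1)] assms(2)
    by (intro tendsto_intros) (simp add: isCont_def filterlim_at_split)
  ultimately show "(err I t x \<longlongrightarrow> x (t i) - x s) (at_left s)"
    by (rule Lim_transform_eventually[rotated])
qed simp

lemma mem_trig_set_iff:
  assumes "i \<in> I" "t i < s" "Suc i \<in> I \<longrightarrow> s \<le> t (Suc i)"
  shows "s \<in> trig_set B K P Q sig th x eta t I j \<longleftrightarrow> t j < s \<and> eta s + th * trigger_term i s \<le> 0"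
  unfolding trig_set_def trigger_term_def using Lim_at_left_err[OF assms] by simp

lemma not_triggered:
  assumes "i \<in> I" "r \<in> interior (seg I t i)"
  shows "eta r + th * trigger_term i r > 0"
proof -
  have r: "t i < r" "Suc i \<in> I \<longrightarrow> r < t (Suc i)"
    using assms(2) unfolding mem_interior_seg by auto
  have "r \<notin> trig_set B K P Q sig th x eta t I i"
  proof (cases "Suc i \<in> I")
    case True
    have "bdd_below (trig_set B K P Q sig th x eta t I i)"
      unfolding trig_set_def by (rule bdd_belowI[of _ "t i"]) auto
    then show ?thesis
      using trigger_set_next[OF assms(1) True] r True cInf_lower by fastforce
  next
    case False
    then show ?thesis using trigger_set_last[OF assms(1)] by simp
  qed
  then show ?thesis using mem_trig_set_iff[OF assms(1) r(1), of i] r by auto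
qed

section \<open>Nonnegativity of the dynamic variable\<close>

lemma eta_nonneg_on_step:
  assumes i: "i \<in> I" and eta_ti: "eta (t i) \<ge> 0"
    and s: "t i \<le> s" "Suc i \<in> I \<longrightarrow> s \<le> t (Suc i)"
  shows "eta s \<ge> 0"
proof (cases "th = 0")
  case True
  have "eta r \<ge> 0" if "t i < r" "r < s" for r
    using not_triggered[OF i, of r] that s True by (auto simp: mem_interior_seg)
  moreover have "isCont eta s" if "t i < s"
    using isCont_eta t_nonneg[OF i] that by simp
  ultimately show ?thesis
    using eta_ti s nonneg_at_left_endpoint[of "t i" s eta] by (cases "s = t i") auto
next
  case False
  then have th: "th > 0" using th_nonneg by simp
  define k where "k = lam + 1 / th"
  text \<open>With this rate, \<open>k * eta + eta'\<close> is the non-triggering quantity divided by \<open>th\<close>.\<close>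
  have "exp (k * t i) * eta (t i) \<le> exp (k * s) * eta s"
  proof (rule exp_scaled_mono[where f' = "\<lambda>r. - lam * eta r + trigger_term i r"])
    show "continuous_on {t i..s} eta"
      using eta_continuous_on t_nonneg[OF i] by blast
    fix r assume "t i < r" "r < s"
    then have r: "r \<in> interior (seg I t i)"
      using s by (auto simp: mem_interior_seg)
    show "(eta has_real_derivative - lam * eta r + trigger_term i r) (at r)"
      by (rule has_real_derivative_eta[OF i r])
    have "k * eta r + (- lam * eta r + trigger_term i r) = (eta r + th * trigger_term i r) / th"
      unfolding k_def using th by (simp add: field_simps)
    then show "0 \<le> k * eta r + (- lam * eta r + trigger_term i r)"
      using not_triggered[OF i r] th by simp
  qed (use s in simp)
  then have "0 \<le> exp (k * s) * eta s"
    using eta_ti by (meson exp_ge_zero mult_nonneg_nonneg order_trans)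
  then show ?thesis by (simp add: zero_le_mult_iff)
qed

lemma eta_sample_nonneg: "i \<in> I \<Longrightarrow> eta (t i) \<ge> 0"
proof (induction i)
  case 0
  then show ?case using t_0 eta_0 by simp
next
  case (Suc i)
  then have "i \<in> I" using index_set_downward_closed by simp
  then show ?case
    using eta_nonneg_on_step[of i "t (Suc i)"] Suc t_less_Suc[OF Suc.prems] by simp
qed

lemma eta_nonneg_seg: "i \<in> I \<Longrightarrow> s \<in> seg I t i \<Longrightarrow> eta s \<ge> 0"
  using eta_nonneg_on_step eta_sample_nonneg unfolding seg_def by (auto split: if_splits)

section \<open>Dwell time\<close>

lemma sampling_error_growth:
  assumes i: "i \<in> I" and s: "t i \<le> s" "Suc i \<in> I \<longrightarrow> s \<le> t (Suc i)"
  shows "(norm (x (t i) - x s))\<^sup>2 + (norm (x (t i)))\<^sup>2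
    \<le> exp (error_growth_rate * (s - t i)) * (norm (x (t i)))\<^sup>2"
proof -
  define c where "c = error_growth_rate"
  define xi where "xi = x (t i)"
  define E where "E r = (norm (xi - x r))\<^sup>2 + (norm xi)\<^sup>2" for r
  have E_quad: "E = (\<lambda>r. quad (mat 1) (xi - x r) + (norm xi)\<^sup>2)"
    unfolding E_def quad_def by (simp add: power2_norm_eq_inner)
  have "exp (- c * s) * E s \<le> exp (- c * t i) * E (t i)"
  proof (rule exp_scaled_antimono[where f = E and f' = "\<lambda>r. 2 * ((xi - x r) \<bullet> (A *v (xi - x r) - (A + B ** K) *v xi))"])
    show "continuous_on {t i..s} E"
      unfolding E_def using t_nonneg[OF i] by (intro continuous_intros x_continuous_on)
    fix r assume "t i < r" "r < s"
    then have r: "r \<in> interior (seg I t i)"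
      using s by (auto simp: mem_interior_seg)
    have "((\<lambda>r. xi - x r) has_vector_derivative - (A *v x r + B *v (K *v xi))) (at r)"
      using has_vector_derivative_diff[OF has_vector_derivative_const has_vector_derivative_x[OF i r]]
      unfolding xi_def by simp
    moreover have "- (A *v x r + B *v (K *v xi)) = A *v (xi - x r) - (A + B ** K) *v xi"
      by (simp add: matrix_vector_mult_add_rdistrib matrix_vector_mul_assoc matrix_vector_mult_diff_distrib)
    ultimately have "((\<lambda>r. quad (mat 1) (xi - x r)) has_real_derivative
        2 * ((xi - x r) \<bullet> (A *v (xi - x r) - (A + B ** K) *v xi))) (at r)"
      using has_real_derivative_quad[of "mat 1"] by (simp add: transpose_mat)
    then show "(E has_real_derivative 2 * ((xi - x r) \<bullet> (A *v (xi - x r) - (A + B ** K) *v xi))) (at r)"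
      unfolding E_quad using DERIV_add[OF _ DERIV_const] by fastforce
    show "- c * E r + 2 * ((xi - x r) \<bullet> (A *v (xi - x r) - (A + B ** K) *v xi)) \<le> 0"
      using sampling_error_derivative_bound[of "xi - x r" xi] unfolding E_def c_def by simp
  qed (use s in simp)
  then have "exp (- c * s) * E s \<le> exp (- c * t i) * (norm xi)\<^sup>2"
    by (simp add: E_def xi_def)
  then have "exp (c * s) * (exp (- c * s) * E s) \<le> exp (c * s) * (exp (- c * t i) * (norm xi)\<^sup>2)"
    by (rule mult_left_mono) simp
  moreover have "exp (c * s) * (exp (- c * s) * E s) = E s"
    by (simp add: mult.assoc[symmetric] mult_exp_exp)
  moreover have "exp (c * s) * (exp (- c * t i) * (norm xi)\<^sup>2) = exp (c * (s - t i)) * (norm xi)\<^sup>2"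
    by (simp add: mult.assoc[symmetric] mult_exp_exp right_diff_distrib)
  ultimately have "E s \<le> exp (c * (s - t i)) * (norm xi)\<^sup>2"
    by linarith
  then show ?thesis
    unfolding E_def c_def xi_def .
qed

lemma sampling_error_le:
  assumes i: "i \<in> I" and s: "t i \<le> s" "s \<le> t i + dwell_time" "Suc i \<in> I \<longrightarrow> s \<le> t (Suc i)"
  shows "norm (x (t i) - x s) \<le> error_ratio * norm (x (t i))"
proof -
  have "error_growth_rate * (s - t i) \<le> error_growth_rate * dwell_time"
    using s error_growth_rate_pos by (intro mult_left_mono) auto
  then have "exp (error_growth_rate * (s - t i)) \<le> 1 + error_ratio\<^sup>2"
    by (simp only: exp_dwell_time[symmetric] exp_le_cancel_iff)
  then have "exp (error_growth_rate * (s - t i)) * (norm (x (t i)))\<^sup>2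
      \<le> (1 + error_ratio\<^sup>2) * (norm (x (t i)))\<^sup>2"
    by (rule mult_right_mono) simp
  moreover have "(1 + error_ratio\<^sup>2) * (norm (x (t i)))\<^sup>2
      = (norm (x (t i)))\<^sup>2 + error_ratio\<^sup>2 * (norm (x (t i)))\<^sup>2"
    by (simp only: distrib_right mult_1)
  ultimately have "(norm (x (t i) - x s))\<^sup>2 \<le> (error_ratio * norm (x (t i)))\<^sup>2"
    using sampling_error_growth[OF i s(1,3)] unfolding power_mult_distrib by linarith
  then show ?thesis
    by (rule power2_le_imp_le) (use error_ratio_pos in simp)
qed

lemma trigger_term_pos:
  assumes i: "i \<in> I" and s: "t i \<le> s" "s \<le> t i + dwell_time" "Suc i \<in> I \<longrightarrow> s \<le> t (Suc i)"
  shows "trigger_term i s > 0"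
proof -
  define e where "e = x (t i) - x s"
  define d where "d = error_ratio"
  define p where "p = onorm ((*v) (P ** (B ** K)))"
  have p: "0 \<le> p"
    unfolding p_def by (rule onorm_matrix_nonneg)
  have d: "0 < d" "d \<le> 1 / 2" "d \<le> sig * quad_min Q / (8 * (p + 1))"
    using error_ratio_pos unfolding d_def p_def error_ratio_def by (simp_all only: min.cobounded1 min.cobounded2)
  have e: "norm e \<le> d * norm (x (t i))"
    unfolding e_def d_def by (rule sampling_error_le[OF i s])
  have "norm (x (t i)) \<le> norm (x s) + norm e"
    unfolding e_def using norm_triangle_ineq[of "x s" "x (t i) - x s"] by simp
  moreover have "d * norm (x (t i)) \<le> norm (x (t i)) / 2"
    using d(2) mult_right_mono[OF d(2), of "norm (x (t i))"] by simp
  ultimately have xi_le: "norm (x (t i)) \<le> 2 * norm (x s)"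
    using e by linarith
  have "norm (x s) > 0"
    using xi_le x_sample_nonzero[OF i] by (smt (verit) zero_less_norm_iff)
  have "8 * p * d \<le> sig * quad_min Q"
  proof -
    have "8 * (p + 1) * d \<le> sig * quad_min Q"
      using d(3) p by (simp add: field_simps)
    then show ?thesis using d(1) by (smt (verit) mult_right_mono)
  qed
  have "2 * (x s \<bullet> (P *v (B *v (K *v e)))) \<le> 2 * (norm (x s) * (p * norm e))"
    using norm_cauchy_schwarz[of "x s" "(P ** (B ** K)) *v e"]
      mult_left_mono[OF norm_matrix_vector_le[of "P ** (B ** K)" e] norm_ge_zero[of "x s"]]
    unfolding p_def by (simp add: matrix_vector_mul_assoc)
  also have "\<dots> \<le> 2 * (norm (x s) * (p * (d * (2 * norm (x s)))))"
    using e xi_le d(1) p by (intro mult_left_mono) (auto intro: order_trans)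
  also have "\<dots> = (8 * p * d) * (norm (x s))\<^sup>2 / 2"
    by (simp add: power2_eq_square)
  also have "\<dots> \<le> sig * quad_min Q * (norm (x s))\<^sup>2 / 2"
    using \<open>8 * p * d \<le> sig * quad_min Q\<close> by (intro divide_right_mono mult_right_mono) simp_all
  finally have "2 * (x s \<bullet> (P *v (B *v (K *v e)))) \<le> sig * quad_min Q * (norm (x s))\<^sup>2 / 2" .
  moreover have "sig * quad_min Q * (norm (x s))\<^sup>2 \<le> sig * quad Q (x s)"
    using quad_min_le[OF pos_Q, of "x s"] sig_pos by (simp add: mult.assoc)
  moreover have "0 < sig * quad_min Q * (norm (x s))\<^sup>2"
    using sig_pos quad_min_pos[OF pos_Q] \<open>norm (x s) > 0\<close> by simp
  ultimately show ?thesis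
    unfolding trigger_term_def e_def by linarith
qed

lemma eta_pos_before_dwell_time:
  assumes i: "i \<in> I" and si: "Suc i \<in> I" and T: "t (Suc i) \<le> t i + dwell_time"
  shows "eta (t (Suc i)) > 0"
proof -
  text \<open>\<open>exp (lam * r) * eta r\<close> strictly increases because the triggering term is positive.\<close>
  have "exp (lam * t i) * eta (t i) < exp (lam * t (Suc i)) * eta (t (Suc i))"
  proof (rule exp_scaled_strict_mono[where f' = "\<lambda>r. - lam * eta r + trigger_term i r"])
    show "t i < t (Suc i)"
      by (rule t_less_Suc[OF si])
    show "continuous_on {t i..t (Suc i)} eta"
      using eta_continuous_on t_nonneg[OF i] by blast
    fix r assume "t i < r" "r < t (Suc i)"
    then have r: "r \<in> interior (seg I t i)"
      by (simp add: mem_interior_seg)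
    show "(eta has_real_derivative - lam * eta r + trigger_term i r) (at r)"
      by (rule has_real_derivative_eta[OF i r])
    show "0 < lam * eta r + (- lam * eta r + trigger_term i r)"
      using trigger_term_pos[OF i, of r] \<open>t i < r\<close> \<open>r < t (Suc i)\<close> T by simp
  qed
  moreover have "0 \<le> exp (lam * t i) * eta (t i)"
    using eta_sample_nonneg[OF i] by simp
  ultimately have "0 < exp (lam * t (Suc i)) * eta (t (Suc i))"
    by linarith
  then show ?thesis
    by (simp add: zero_less_mult_iff)
qed

lemma no_trigger_right_after_sample:
  assumes i: "i \<in> I" and si: "Suc i \<in> I" and pos: "eta (t (Suc i)) > 0"
  obtains b where "b > t (Suc i)"
    and "\<And>y. t (Suc i) < y \<Longrightarrow> y < b \<Longrightarrow> y \<notin> trig_set B K P Q sig th x eta t I i"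
proof -
  define T where "T = t (Suc i)"
  text \<open>Past \<open>t (Suc i)\<close> the left limit of \<open>err\<close> in \<open>trig_set \<dots> i\<close> refers to the new sample
    \<open>x (t (Suc i))\<close>, so the relevant quantity there is \<open>trigger_term (Suc i)\<close>.\<close>
  define psi where "psi r = eta r + th * trigger_term (Suc i) r" for r
  have "T > 0"
    using t_nonneg[OF i] t_less_Suc[OF si] unfolding T_def by simp
  have "isCont psi T"
    unfolding psi_def trigger_term_def quad_def
    using isCont_x[OF \<open>T > 0\<close>] isCont_eta[OF \<open>T > 0\<close>] by (intro continuous_intros) auto
  then have "(psi \<longlongrightarrow> psi T) (at_right T)"
    by (simp add: isCont_def filterlim_at_split)
  moreover have "psi T > 0"
    unfolding psi_def trigger_term_def T_def
    using pos th_nonneg sig_pos quad_nonneg[OF pos_Q] by (simp add: add_pos_nonneg)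
  ultimately have "eventually (\<lambda>r. psi r > 0) (at_right T)"
    by (rule order_tendstoD(1))
  moreover have "eventually (\<lambda>r. Suc (Suc i) \<in> I \<longrightarrow> r < t (Suc (Suc i))) (at_right T)"
  proof (cases "Suc (Suc i) \<in> I")
    case True
    then have "T < t (Suc (Suc i))"
      using t_less_Suc unfolding T_def by simp
    from eventually_at_right_real[OF this] show ?thesis
      by eventually_elim auto
  qed simp
  ultimately have "eventually (\<lambda>r. psi r > 0 \<and> (Suc (Suc i) \<in> I \<longrightarrow> r < t (Suc (Suc i)))) (at_right T)"
    by (rule eventually_conj)
  then obtain b where b: "b > T"
    and near: "\<And>y. T < y \<Longrightarrow> y < b \<Longrightarrow> psi y > 0 \<and> (Suc (Suc i) \<in> I \<longrightarrow> y < t (Suc (Suc i)))"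
    unfolding eventually_at_right_field by blast
  show ?thesis
  proof (rule that[OF b[unfolded T_def]])
    fix y assume "t (Suc i) < y" "y < b"
    then show "y \<notin> trig_set B K P Q sig th x eta t I i"
      using near[of y] mem_trig_set_iff[OF si, of y i] unfolding psi_def T_def by auto
  qed
qed

lemma dwell_time_le_inter_execution_time:
  assumes i: "i \<in> I" and si: "Suc i \<in> I"
  shows "dwell_time \<le> t (Suc i) - t i"
proof (rule ccontr)
  assume "\<not> ?thesis"
  then have T: "t (Suc i) \<le> t i + dwell_time" by simp
  have eta_T: "eta (t (Suc i)) > 0"
    by (rule eta_pos_before_dwell_time[OF i si T])
  obtain b where b: "b > t (Suc i)"
    and after: "\<And>y. t (Suc i) < y \<Longrightarrow> y < b \<Longrightarrow> y \<notin> trig_set B K P Q sig th x eta t I i"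
    using no_trigger_right_after_sample[OF i si eta_T] by blast
  have before: "eta y + th * trigger_term i y > 0" if "t i < y" "y \<le> t (Suc i)" for y
  proof (cases "y = t (Suc i)")
    case True
    then show ?thesis
      using eta_T th_nonneg trigger_term_pos[OF i, of y] T t_less_Suc[OF si]
      by (simp add: add_pos_nonneg)
  next
    case False
    then show ?thesis
      using not_triggered[OF i, of y] that by (simp add: mem_interior_seg)
  qed
  have "b \<le> y" if y: "y \<in> trig_set B K P Q sig th x eta t I i" for y
  proof (rule ccontr)
    assume "\<not> b \<le> y"
    have "t i < y"
      using y unfolding trig_set_def by simp
    show False
    proof (cases "y \<le> t (Suc i)")
      case True
      then show False
        using y before[OF \<open>t i < y\<close> True] mem_trig_set_iff[OF i \<open>t i < y\<close>, of i] by simp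
    next
      case False
      then show False
        using y after[of y] \<open>\<not> b \<le> y\<close> by simp
    qed
  qed
  then have "b \<le> t (Suc i)"
    using trigger_set_next[OF i si] by (metis cInf_greatest)
  with b show False by simp
qed

section \<open>Exponential decay\<close>

lemma has_real_derivative_quad_P_x:
  assumes "i \<in> I" "r \<in> interior (seg I t i)"
  shows "((\<lambda>r. quad P (x r)) has_real_derivative
           - quad Q (x r) + 2 * (x r \<bullet> (P *v (B *v (K *v (x (t i) - x r)))))) (at r)"
proof -
  have "A *v x r + B *v (K *v x (t i)) = (A + B ** K) *v x r + B *v (K *v (x (t i) - x r))"
    by (simp add: matrix_vector_mult_add_rdistrib matrix_vector_mul_assoc[symmetric]
        matrix_vector_mult_diff_distrib)
  then show ?thesis
    using has_real_derivative_quad[OF sym_P has_vector_derivative_x[OF assms]] lyapunov_derivative[of "x r"]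
    by (simp add: matrix_vector_right_distrib inner_add_right)
qed

lemma storage_decay_on_step:
  assumes mu: "mu \<le> lam" "mu \<le> (1 - sig) * kappa"
    and i: "i \<in> I" and s: "t i \<le> s" "Suc i \<in> I \<longrightarrow> s \<le> t (Suc i)"
  shows "exp (mu * s) * (quad P (x s) + eta s) \<le> exp (mu * t i) * (quad P (x (t i)) + eta (t i))"
proof (rule exp_scaled_antimono[where f = "\<lambda>r. quad P (x r) + eta r"
      and f' = "\<lambda>r. - (1 - sig) * quad Q (x r) - lam * eta r"])
  show "continuous_on {t i..s} (\<lambda>r. quad P (x r) + eta r)"
    unfolding quad_def using t_nonneg[OF i]
    by (intro continuous_intros x_continuous_on eta_continuous_on) auto
  fix r assume "t i < r" "r < s"
  then have r: "r \<in> interior (seg I t i)"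
    using s by (auto simp: mem_interior_seg)
  have "((\<lambda>r. quad P (x r) + eta r) has_real_derivative
          (- quad Q (x r) + 2 * (x r \<bullet> (P *v (B *v (K *v (x (t i) - x r))))))
          + (- lam * eta r + trigger_term i r)) (at r)"
    by (rule DERIV_add[OF has_real_derivative_quad_P_x[OF i r] has_real_derivative_eta[OF i r]])
  then show "((\<lambda>r. quad P (x r) + eta r) has_real_derivative
      - (1 - sig) * quad Q (x r) - lam * eta r) (at r)"
    unfolding trigger_term_def by (simp add: algebra_simps)
  have "eta r \<ge> 0"
    using eta_nonneg_seg[OF i] interior_subset r by blast
  then have "mu * eta r \<le> lam * eta r"
    using mu by (simp add: mult_right_mono)
  moreover have "mu * quad P (x r) \<le> (1 - sig) * (kappa * quad P (x r))"
    using mu quad_P_nonneg[of "x r"] by (simp add: mult.assoc[symmetric] mult_right_mono)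
  moreover have "(1 - sig) * (kappa * quad P (x r)) \<le> (1 - sig) * quad Q (x r)"
    using Q_ge_P sig_less_1 by (simp add: mult_left_mono)
  ultimately show "mu * (quad P (x r) + eta r) + (- (1 - sig) * quad Q (x r) - lam * eta r) \<le> 0"
    by (simp add: algebra_simps)
qed (use s in simp)

lemma storage_decay_samples:
  assumes mu: "mu \<le> lam" "mu \<le> (1 - sig) * kappa"
  shows "i \<in> I \<Longrightarrow> exp (mu * t i) * (quad P (x (t i)) + eta (t i)) \<le> quad P (x 0)"
proof (induction i)
  case 0
  then show ?case using t_0 eta_0 by simp
next
  case (Suc i)
  then have "i \<in> I" using index_set_downward_closed by simp
  then show ?case
    using Suc storage_decay_on_step[OF mu, of i "t (Suc i)"] t_less_Suc[OF Suc.prems] by simp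
qed

lemma t_ge_linear: "i \<in> I \<Longrightarrow> t i \<ge> real i * dwell_time"
proof (induction i)
  case (Suc i)
  then have "i \<in> I" using index_set_downward_closed by simp
  then show ?case
    using Suc dwell_time_le_inter_execution_time[OF _ Suc.prems] by (simp add: algebra_simps)
qed (simp add: t_0)

lemma seg_cover:
  assumes "s \<ge> 0"
  obtains i where "i \<in> I" "s \<in> seg I t i"
proof (cases "\<exists>j\<in>I. s < t j")
  case True
  define j where "j = (LEAST j. j \<in> I \<and> s < t j)"
  have j: "j \<in> I" "s < t j"
    using LeastI_ex[of "\<lambda>j. j \<in> I \<and> s < t j"] True unfolding j_def by auto
  then obtain k where k: "j = Suc k"
    using t_0 assms by (cases j) auto
  have "k \<in> I"
    using index_set_downward_closed[OF j(1)] k by simp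
  moreover have "t k \<le> s"
    using not_less_Least[of k "\<lambda>j. j \<in> I \<and> s < t j"] \<open>k \<in> I\<close> k unfolding j_def by auto
  ultimately show ?thesis
    using that j k unfolding seg_def by auto
next
  case False
  have "I \<noteq> UNIV"
  proof
    assume "I = UNIV"
    obtain n :: nat where "s / dwell_time < real n"
      using reals_Archimedean2 by blast
    then have "s < t n"
      using t_ge_linear[of n] dwell_time_pos \<open>I = UNIV\<close> by (simp add: field_simps)
    with False \<open>I = UNIV\<close> show False by auto
  qed
  then obtain N where N: "I = {0..N}"
    using index_set_cases by blast
  then have "t N \<le> s"
    using False by (force simp: not_less)
  then show ?thesis
    using that[of N] N unfolding seg_def by auto
qed

lemma storage_decay:
  assumes mu: "mu \<le> lam" "mu \<le> (1 - sig) * kappa" and s: "s \<ge> 0"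
  shows "quad P (x s) + eta s \<le> quad P (x 0) * exp (- mu * s)"
proof -
  obtain i where i: "i \<in> I" "s \<in> seg I t i"
    using seg_cover[OF s] .
  then have "exp (mu * s) * (quad P (x s) + eta s) \<le> quad P (x 0)"
    using storage_decay_on_step[OF mu i(1), of s] storage_decay_samples[OF mu i(1)]
    unfolding seg_def by (auto split: if_splits)
  then show ?thesis
    by (simp add: exp_minus field_simps)
qed

lemma eta_nonneg: "s \<ge> 0 \<Longrightarrow> eta s \<ge> 0"
  by (metis seg_cover eta_nonneg_seg)

lemma storage_tendsto_zero: "((\<lambda>s. quad P (x s) + eta s) \<longlongrightarrow> 0) at_top"
proof -
  define mu where "mu = min lam ((1 - sig) * kappa)"
  have "eventually (\<lambda>s. 0 \<le> quad P (x s) + eta s) at_top"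
    using eventually_ge_at_top[of "0::real"]
    by eventually_elim (simp add: quad_P_nonneg eta_nonneg add_nonneg_nonneg)
  moreover have "eventually (\<lambda>s. quad P (x s) + eta s \<le> quad P (x 0) * exp (- mu * s)) at_top"
    using eventually_ge_at_top[of "0::real"]
    by eventually_elim (rule storage_decay, simp_all add: mu_def)
  moreover have "mu > 0"
    unfolding mu_def using lam_pos sig_less_1 kappa_pos by simp
  then have "((\<lambda>s. quad P (x 0) * exp (- mu * s)) \<longlongrightarrow> 0) at_top"
    by real_asymp
  ultimately show ?thesis
    by (rule tendsto_sandwich[OF _ _ tendsto_const])
qed

lemma eta_tendsto_zero: "(eta \<longlongrightarrow> 0) at_top"
proof (rule tendsto_sandwich[OF _ _ tendsto_const storage_tendsto_zero])
  show "eventually (\<lambda>s. 0 \<le> eta s) at_top"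
    using eventually_ge_at_top[of "0::real"] by eventually_elim (rule eta_nonneg)
  show "eventually (\<lambda>s. eta s \<le> quad P (x s) + eta s) at_top"
    by (simp add: quad_P_nonneg)
qed

lemma x_tendsto_zero: "(x \<longlongrightarrow> 0) at_top"
proof -
  have "((\<lambda>s. (norm (x s))\<^sup>2) \<longlongrightarrow> 0) at_top"
  proof (rule tendsto_sandwich[OF _ _ tendsto_const tendsto_divide_zero[OF storage_tendsto_zero]])
    show "eventually (\<lambda>s. 0 \<le> (norm (x s))\<^sup>2) at_top"
      by (rule always_eventually) simp
    show "eventually (\<lambda>s. (norm (x s))\<^sup>2 \<le> (quad P (x s) + eta s) / quad_min P) at_top"
      using eventually_ge_at_top[of "0::real"]
    proof eventually_elim
      case (elim s)
      then have "quad_min P * (norm (x s))\<^sup>2 \<le> quad P (x s) + eta s"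
        using quad_min_le[OF pos_P, of "x s"] eta_nonneg[of s] by linarith
      then show ?case
        using quad_min_pos[OF pos_P] by (simp add: field_simps)
    qed
  qed
  then have "((\<lambda>s. sqrt ((norm (x s))\<^sup>2)) \<longlongrightarrow> sqrt 0) at_top"
    by (rule tendsto_real_sqrt)
  then show ?thesis
    by (simp add: tendsto_norm_zero_iff)
qed

lemma decay_rate:
  assumes "lam = (1 - sig) * kappa" "s \<ge> 0"
  shows "quad P (x s) \<le> quad P (x 0) * exp ((sig - 1) * kappa * s)"
  using storage_decay[of lam s] eta_nonneg[of s] assms by (simp add: algebra_simps)

end

theorem theorem2:
  fixes A :: "real^'n^'n" and B :: "real^'m^'n" and K :: "real^'n^'m"
    and P Q :: "real^'n^'n" and kappa lam sig th :: real
  assumes "hurwitz (A + B ** K)"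
    and "sym_pos_def P" and "sym_pos_def Q"
    and "transpose (A + B ** K) ** P + P ** (A + B ** K) = - Q"
    and "kappa > 0" and "\<forall>v. quad Q v \<ge> kappa * quad P v"
    and "lam > 0" and "0 < sig" and "sig < 1" and "th \<ge> 0"
  shows "(\<exists>tau>0. \<forall>x eta t I. event_solution A B K P Q lam sig th x eta t I \<longrightarrow>
            (\<forall>i. i \<in> I \<and> Suc i \<in> I \<longrightarrow> t (Suc i) - t i \<ge> tau))
       \<and> (\<forall>x eta t I. event_solution A B K P Q lam sig th x eta t I \<longrightarrow>
            (x \<longlongrightarrow> 0) at_top \<and> (eta \<longlongrightarrow> 0) at_top)
       \<and> (lam = (1 - sig) * kappa \<longrightarrow>
            (\<forall>x eta t I. event_solution A B K P Q lam sig th x eta t I \<longrightarrow>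
              (\<forall>s\<ge>0. quad P (x s) \<le> quad P (x 0) * exp ((sig - 1) * kappa * s))))"
proof -
  interpret loop: event_triggered_loop A B K P Q kappa lam sig th
    using assms(2-) by unfold_locales auto
  have execution: "event_triggered_execution A B K P Q kappa lam sig th x eta t I"
    if "event_solution A B K P Q lam sig th x eta t I" for x eta t I
    using loop.event_triggered_loop_axioms that by (rule event_triggered_execution.intro[OF _ event_triggered_execution_axioms.intro])
  show ?thesis
    using loop.dwell_time_pos
      event_triggered_execution.dwell_time_le_inter_execution_time[OF execution]
      event_triggered_execution.x_tendsto_zero[OF execution]
      event_triggered_execution.eta_tendsto_zero[OF execution]
      event_triggered_execution.decay_rate[OF execution]
    by blast
qed

end
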